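(* Let $(\mathbf X,\mathbf Y)$ be a general correlated source which is uniformly integrable. Then \[\limsup_{n\to\infty}\frac1n H(X^n|Y^n)\le\overline H_s(\mathbf X|\mathbf Y)\le\overline H(\mathbf X|\mathbf Y).\]
   Context: A general correlated source $(\mathbf X,\mathbf Y)=\{(X^n,Y^n)\}_{n\ge1}$ is an arbitrary sequence of pairs of random variables on $\mathcal X^n\times\mathcal Y^n$, $\mathcal X,\mathcal Y$ finite or countably infinite (no structural assumptions; marginal probabilities positive). Logs base 2. $H(X^n|Y^n)$ is the conditional entropy. The source is uniformly integrable if $Z_n=\frac1n\log\frac1{P_{X^n|Y^n}(X^n|Y^n)}$ satisfies $\lim_{u\to\infty}\sup_n\sum_{z:|z|\ge u}P_{Z_n}(z)|z|=0$. $\overline H(\mathbf X|\mathbf Y)=\inf\{\alpha:\lim_n\Pr\{\frac1n\log\frac1{P_{X^n|Y^n}(X^n|Y^n)}>\alpha\}=0\}$. For $x^n$ and $\varepsilon\in(0,1]$, $\overline h^\varepsilon(x^n)=\inf\{a\in\mathbb R:\sum_{y^n:\log(1/P_{X^n|Y^n}(x^n|y^n))>a}P_{Y^n|X^n}(y^n|x^n)\le\varepsilon\}$; $\overline H_s^\varepsilon(X^n|Y^n)=\sum_{x^n}P_{X^n}(x^n)\overline h^\varepsilon(x^n)$; $\overline H_s(\mathbf X|\mathbf Y)=\lim_{\varepsilon\downarrow0}\limsup_n\frac1n\overline H_s^\varepsilon(X^n|Y^n)$. *)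

theory Defs
  imports "HOL-Probability.Probability"
begin

text \<open>A general correlated source: for each n a joint pmf P n on X^n \<times> Y^n,
  where X^n and Y^n are represented as lists of length n over the
  (finite or countably infinite) alphabets 'x and 'y.\<close>

definition gen_source :: "(nat \<Rightarrow> ('x list \<times> 'y list) pmf) \<Rightarrow> bool" where
  "gen_source P \<longleftrightarrow> (\<forall>n. set_pmf (P n) \<subseteq> {(x, y). length x = n \<and> length y = n})"

definition pX :: "(nat \<Rightarrow> ('x list \<times> 'y list) pmf) \<Rightarrow> nat \<Rightarrow> 'x list \<Rightarrow> real" where
  "pX P n x = pmf (map_pmf fst (P n)) x"

definition pY :: "(nat \<Rightarrow> ('x list \<times> 'y list) pmf) \<Rightarrow> nat \<Rightarrow> 'y list \<Rightarrow> real" where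
  "pY P n y = pmf (map_pmf snd (P n)) y"

definition condXY :: "(nat \<Rightarrow> ('x list \<times> 'y list) pmf) \<Rightarrow> nat \<Rightarrow> 'x list \<Rightarrow> 'y list \<Rightarrow> real" where
  "condXY P n x y = pmf (P n) (x, y) / pY P n y"

definition Zn :: "(nat \<Rightarrow> ('x list \<times> 'y list) pmf) \<Rightarrow> nat \<Rightarrow> 'x list \<times> 'y list \<Rightarrow> real" where
  "Zn P n xy = log 2 (1 / condXY P n (fst xy) (snd xy)) / real n"

definition unif_integrable :: "(nat \<Rightarrow> ('x list \<times> 'y list) pmf) \<Rightarrow> bool" where
  "unif_integrable P \<longleftrightarrow>
     ((\<lambda>u::real. SUP n\<in>{1..}. \<integral>\<^sup>+ xy. ennreal (\<bar>Zn P n xy\<bar> * indicator {xy. \<bar>Zn P n xy\<bar> \<ge> u} xy)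
          \<partial>measure_pmf (P n)) \<longlongrightarrow> 0) at_top"

definition cond_entropy :: "(nat \<Rightarrow> ('x list \<times> 'y list) pmf) \<Rightarrow> nat \<Rightarrow> ereal" where
  "cond_entropy P n = enn2ereal (\<integral>\<^sup>+ xy. ennreal (log 2 (1 / condXY P n (fst xy) (snd xy))) \<partial>measure_pmf (P n))"

definition spec_sup_entropy :: "(nat \<Rightarrow> ('x list \<times> 'y list) pmf) \<Rightarrow> ereal" where
  "spec_sup_entropy P = Inf (ereal ` {\<alpha>::real.
      ((\<lambda>n. measure_pmf.prob (P n) {xy. Zn P n xy > \<alpha>}) \<longlongrightarrow> 0) sequentially})"

text \<open>\<open>\<overline>h^\<epsilon>(x^n)\<close>: the tail condition
  \<open>\<Sum>_{y: log(1/P(x|y)) > a} P_{Y|X}(y|x) \<le> \<epsilon>\<close> is written as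
  \<open>P_{XY}({x}\<times>{y. log(1/P(x|y)) > a}) / P_X(x) \<le> \<epsilon>\<close>.\<close>
definition hbar :: "(nat \<Rightarrow> ('x list \<times> 'y list) pmf) \<Rightarrow> real \<Rightarrow> nat \<Rightarrow> 'x list \<Rightarrow> ereal" where
  "hbar P \<epsilon> n x = Inf (ereal ` {a::real.
      measure_pmf.prob (P n) {(x', y). x' = x \<and> log 2 (1 / condXY P n x y) > a} / pX P n x \<le> \<epsilon>})"

text \<open>For \<open>\<epsilon> < 1\<close> all
  \<open>\<overline>h^\<epsilon>(x) \<ge> 0\<close>, so the sum is taken as a nonnegative integral over P_X.\<close>
definition Hs_eps :: "(nat \<Rightarrow> ('x list \<times> 'y list) pmf) \<Rightarrow> real \<Rightarrow> nat \<Rightarrow> ereal" where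
  "Hs_eps P \<epsilon> n = enn2ereal (\<integral>\<^sup>+ x. e2ennreal (hbar P \<epsilon> n x) \<partial>measure_pmf (map_pmf fst (P n)))"

definition Hs :: "(nat \<Rightarrow> ('x list \<times> 'y list) pmf) \<Rightarrow> ereal" where
  "Hs P = Lim (at_right 0) (\<lambda>\<epsilon>. limsup (\<lambda>n. Hs_eps P \<epsilon> n / ereal (real n)))"

end

theory Submission
  imports Defs
begin

text \<open>For each \<open>x\<close>, \<open>hbar\<close> is the upper \<open>\<epsilon>\<close>-quantile of the conditional self-information
  \<open>log (1 / P(x|y))\<close> on the fiber over \<open>x\<close>. Uniform integrability of \<open>Z\<^sub>n\<close> makes the
  self-information uniformly absolutely continuous: every set of probability at most \<open>\<delta>\<close>
  carries at most \<open>n\<eta>\<close> of its expectation.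

  For the first inequality, the self-information exceeds \<open>hbar(x) + t\<close> only on a set of
  probability at most \<open>\<epsilon>\<close>, so \<open>H(X\<^sup>n|Y\<^sup>n) \<le> H\<^sub>s\<^sup>\<epsilon> + t + n\<eta>\<close>.
  For the second, let \<open>\<alpha>\<close> be a threshold with \<open>P{Z\<^sub>n > \<alpha>} \<rightarrow> 0\<close>. On fibers where the level
  \<open>n\<alpha>\<close> is admissible, \<open>hbar \<le> n\<alpha>\<close>; the remaining fibers have total probability at most
  \<open>P{Z\<^sub>n > \<alpha>} / \<epsilon>\<close>, and on them Markov's inequality bounds \<open>hbar\<close> by the fiber mean
  divided by \<open>\<epsilon>\<close>, so by absolute continuity they contribute only \<open>o(n)\<close>.\<close>

lemma nn_integral_pmf_fiberwise:
  fixes p :: "('a::countable \<times> 'b) pmf"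
  shows "(\<integral>\<^sup>+ z. f z \<partial>p) = (\<integral>\<^sup>+ x. (\<integral>\<^sup>+ z. f z * indicator (fst -` {x}) z \<partial>p) \<partial>count_space UNIV)"
proof -
  have fiber: "indicator (fst -` {x}) z = (indicator {fst z} x :: ennreal)" for x z
    by (simp split: split_indicator)
  have "(\<integral>\<^sup>+ z. f z \<partial>p) = (\<integral>\<^sup>+ z. (\<integral>\<^sup>+ x. f z * indicator (fst -` {x}) z \<partial>count_space UNIV) \<partial>p)"
    by (simp add: fiber)
  also have "\<dots> = (\<integral>\<^sup>+ x. (\<integral>\<^sup>+ z. f z * indicator (fst -` {x}) z \<partial>p) \<partial>count_space UNIV)"
    by (rule nn_integral_count_space_nn_integral) auto
  finally show ?thesis .
qed

lemma emeasure_pmf_fiberwise: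
  fixes p :: "('a::countable \<times> 'b) pmf"
  shows "emeasure p B = (\<integral>\<^sup>+ x. emeasure p (B \<inter> fst -` {x}) \<partial>count_space UNIV)"
  using nn_integral_pmf_fiberwise[where f = "indicator B" and p = p]
  by (simp add: indicator_inter_arith[symmetric])

lemma emeasure_pmf_vimage_fst:
  fixes p :: "('a \<times> 'b) pmf"
  shows "emeasure p (fst -` D) = (\<integral>\<^sup>+ x. ennreal (pmf (map_pmf fst p) x) * indicator D x \<partial>count_space UNIV)"
proof -
  have "emeasure p (fst -` D) = emeasure (map_pmf fst p) D"
    by simp
  also have "\<dots> = (\<integral>\<^sup>+ x. indicator D x \<partial>map_pmf fst p)"
    by (rule nn_integral_indicator[symmetric]) simp
  also have "\<dots> = (\<integral>\<^sup>+ x. ennreal (pmf (map_pmf fst p) x) * indicator D x \<partial>count_space UNIV)"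
    by (rule nn_integral_measure_pmf)
  finally show ?thesis .
qed

lemma nn_integral_pmf_vimage_fst:
  fixes p :: "('a::countable \<times> 'b) pmf"
  shows "(\<integral>\<^sup>+ z. f z * indicator (fst -` D) z \<partial>p)
    = (\<integral>\<^sup>+ x. indicator D x * (\<integral>\<^sup>+ z. f z * indicator (fst -` {x}) z \<partial>p) \<partial>count_space UNIV)"
proof -
  have "f z * indicator (fst -` D) z * indicator (fst -` {x}) z
      = indicator D x * (f z * indicator (fst -` {x}) z)" for x z
    by (simp split: split_indicator)
  then show ?thesis
    by (subst nn_integral_pmf_fiberwise) (simp add: nn_integral_cmult)
qed

lemma emeasure_pmf_Markov:
  fixes p :: "'a pmf"
  shows "ennreal c * emeasure p {z \<in> A. c < f z} \<le> (\<integral>\<^sup>+ z. ennreal (f z) * indicator A z \<partial>p)"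
proof -
  have "ennreal c * emeasure p {z \<in> A. c < f z} = (\<integral>\<^sup>+ z. ennreal c * indicator {z \<in> A. c < f z} z \<partial>p)"
    by (rule nn_integral_cmult_indicator[symmetric]) simp
  also have "\<dots> \<le> (\<integral>\<^sup>+ z. ennreal (f z) * indicator A z \<partial>p)"
    by (rule nn_integral_mono) (auto split: split_indicator intro: ennreal_leI)
  finally show ?thesis .
qed

lemma limsup_div_le_add:
  fixes f g :: "nat \<Rightarrow> ereal"
  assumes "eventually (\<lambda>n. f n \<le> g n + ereal (real n * c)) sequentially"
    and "\<And>n. 0 \<le> f n" "\<And>n. 0 \<le> g n"
  shows "limsup (\<lambda>n. f n / ereal (real n)) \<le> limsup (\<lambda>n. g n / ereal (real n)) + ereal c"
proof -
  have "eventually (\<lambda>n. f n / ereal (real n) \<le> g n / ereal (real n) + ereal c) sequentially"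
    using assms(1) eventually_ge_at_top[of 1]
  proof eventually_elim
    case (elim n)
    then show ?case
      using assms(2,3)[of n] by (cases "f n"; cases "g n") (auto simp: field_simps)
  qed
  then have "limsup (\<lambda>n. f n / ereal (real n)) \<le> limsup (\<lambda>n. g n / ereal (real n) + ereal c)"
    by (rule Limsup_mono)
  also have "\<dots> \<le> limsup (\<lambda>n. g n / ereal (real n)) + limsup (\<lambda>n. ereal c)"
    by (rule ereal_limsup_add_mono)
  finally show ?thesis
    by (simp add: Limsup_const)
qed

definition self_info :: "(nat \<Rightarrow> ('x list \<times> 'y list) pmf) \<Rightarrow> nat \<Rightarrow> 'x list \<times> 'y list \<Rightarrow> real" where
  "self_info P n xy = log 2 (1 / condXY P n (fst xy) (snd xy))"

definition fiber_tail :: "(nat \<Rightarrow> ('x list \<times> 'y list) pmf) \<Rightarrow> nat \<Rightarrow> 'x list \<Rightarrow> real \<Rightarrow> real" where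
  "fiber_tail P n x a = measure (P n) (fst -` {x} \<inter> {xy. a < self_info P n xy})"

definition fiber_info :: "(nat \<Rightarrow> ('x list \<times> 'y list) pmf) \<Rightarrow> nat \<Rightarrow> 'x list \<Rightarrow> ennreal" where
  "fiber_info P n x = (\<integral>\<^sup>+ xy. ennreal (self_info P n xy) * indicator (fst -` {x}) xy \<partial>P n)"

lemma Zn_eq_self_info: "Zn P n xy = self_info P n xy / real n"
  by (simp add: Zn_def self_info_def)

lemma cond_entropy_eq_nn_integral:
  "cond_entropy P n = enn2ereal (\<integral>\<^sup>+ xy. ennreal (self_info P n xy) \<partial>P n)"
  by (simp add: cond_entropy_def self_info_def)

lemma pX_eq_measure: "pX P n x = measure (P n) (fst -` {x})"
  by (simp add: pX_def pmf_map)

lemma pmf_le_pX: "pmf (P n) xy \<le> pX P n (fst xy)"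
  unfolding pX_eq_measure measure_pmf_single[symmetric]
  by (rule measure_pmf.finite_measure_mono) auto

lemma pmf_le_pY: "pmf (P n) xy \<le> pY P n (snd xy)"
proof -
  have "measure (P n) {xy} \<le> measure (P n) (snd -` {snd xy})"
    by (rule measure_pmf.finite_measure_mono) auto
  then show ?thesis
    by (simp add: pY_def pmf_map measure_pmf_single)
qed

lemma pX_pos_of_set_pmf: "xy \<in> set_pmf (P n) \<Longrightarrow> 0 < pX P n (fst xy)"
  using pmf_le_pX[of P n xy] pmf_positive[of xy "P n"] by linarith

lemma self_info_nonneg:
  assumes "xy \<in> set_pmf (P n)"
  shows "0 \<le> self_info P n xy"
proof -
  have "0 < pmf (P n) xy"
    using assms by (simp add: pmf_positive)
  then have "0 < condXY P n (fst xy) (snd xy)" "condXY P n (fst xy) (snd xy) \<le> 1"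
    using pmf_le_pY[of P n xy] by (auto simp: condXY_def)
  then show ?thesis
    by (simp add: self_info_def)
qed

section \<open>The fiberwise quantile\<close>

lemma hbar_eq_Inf_fiber_tail:
  assumes "0 < pX P n x"
  shows "hbar P \<epsilon> n x = Inf (ereal ` {a. fiber_tail P n x a \<le> \<epsilon> * pX P n x})"
proof -
  have "{(x', y). x' = x \<and> a < log 2 (1 / condXY P n x y)} = fst -` {x} \<inter> {xy. a < self_info P n xy}" for a
    by (auto simp: self_info_def)
  then show ?thesis
    using assms by (simp add: hbar_def fiber_tail_def divide_le_eq)
qed

lemma fiber_tail_antimono: "a \<le> b \<Longrightarrow> fiber_tail P n x b \<le> fiber_tail P n x a"
  unfolding fiber_tail_def by (rule measure_pmf.finite_measure_mono) auto

lemma hbar_le_if_fiber_tail_le: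
  assumes "0 < pX P n x" "fiber_tail P n x a \<le> \<epsilon> * pX P n x"
  shows "hbar P \<epsilon> n x \<le> ereal a"
  unfolding hbar_eq_Inf_fiber_tail[OF assms(1)] using assms(2) by (intro Inf_lower) auto

lemma fiber_tail_le_if_hbar_less:
  assumes "0 < pX P n x" "hbar P \<epsilon> n x < ereal b"
  shows "fiber_tail P n x b \<le> \<epsilon> * pX P n x"
proof -
  obtain a where "fiber_tail P n x a \<le> \<epsilon> * pX P n x" "a < b"
    using assms unfolding hbar_eq_Inf_fiber_tail[OF assms(1)] by (auto simp: Inf_less_iff)
  then show ?thesis
    using fiber_tail_antimono[of a b P n x] by linarith
qed

lemma nonneg_if_fiber_tail_le:
  assumes "0 < pX P n x" "\<epsilon> < 1" "fiber_tail P n x a \<le> \<epsilon> * pX P n x"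
  shows "0 \<le> a"
proof (rule ccontr)
  assume "\<not> 0 \<le> a"
  then have "fst -` {x} \<inter> set_pmf (P n) \<subseteq> fst -` {x} \<inter> {xy. a < self_info P n xy}"
    using self_info_nonneg[of _ P n] by force
  then have "measure (P n) (fst -` {x} \<inter> set_pmf (P n)) \<le> fiber_tail P n x a"
    unfolding fiber_tail_def by (rule measure_pmf.finite_measure_mono) auto
  then have "pX P n x \<le> \<epsilon> * pX P n x"
    using assms(3) by (simp add: measure_Int_set_pmf pX_eq_measure)
  with assms(1,2) show False
    by simp
qed

lemma hbar_nonneg:
  assumes "0 < pX P n x" "\<epsilon> < 1"
  shows "0 \<le> hbar P \<epsilon> n x"
  unfolding hbar_eq_Inf_fiber_tail[OF assms(1)]
  by (rule Inf_greatest) (auto intro: nonneg_if_fiber_tail_le[OF assms])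

lemma hbar_antimono: "\<epsilon>1 \<le> \<epsilon>2 \<Longrightarrow> hbar P \<epsilon>2 n x \<le> hbar P \<epsilon>1 n x"
  unfolding hbar_def by (rule Inf_superset_mono) auto

text \<open>Since \<open>\<epsilon> \<cdot> pX(x) \<cdot> markov_level(x) = fiber_info(x) + pX(x)\<close> strictly exceeds
  \<open>fiber_info(x)\<close>, Markov's inequality makes this level admissible in the definition of
  \<open>hbar\<close>.\<close>
definition markov_level :: "(nat \<Rightarrow> ('x list \<times> 'y list) pmf) \<Rightarrow> real \<Rightarrow> nat \<Rightarrow> 'x list \<Rightarrow> real" where
  "markov_level P \<epsilon> n x = (enn2real (fiber_info P n x) / pX P n x + 1) / \<epsilon>"

lemma fiber_tail_markov_level_le:
  assumes "0 < pX P n x" "0 < \<epsilon>" "fiber_info P n x \<noteq> \<top>"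
  shows "fiber_tail P n x (markov_level P \<epsilon> n x) \<le> \<epsilon> * pX P n x"
proof -
  define c where "c = markov_level P \<epsilon> n x"
  define e where "e = enn2real (fiber_info P n x)"
  define p where "p = pX P n x"
  have "0 \<le> e" "0 < p"
    using assms(1) by (auto simp: e_def p_def)
  have c_unfolded: "c = (e / p + 1) / \<epsilon>"
    by (simp add: c_def markov_level_def e_def p_def)
  have "0 < c"
    unfolding c_unfolded using \<open>0 \<le> e\<close> \<open>0 < p\<close> assms(2) by (intro divide_pos_pos add_nonneg_pos) auto
  have c_eq: "c * (\<epsilon> * p) = e + p"
    unfolding c_unfolded using \<open>0 < p\<close> assms(2) by (simp add: field_simps)
  have "ennreal c * emeasure (P n) {z \<in> fst -` {x}. c < self_info P n z} \<le> fiber_info P n x"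
    unfolding fiber_info_def by (rule emeasure_pmf_Markov)
  also have "\<dots> = ennreal e"
    using assms(3) by (simp add: e_def ennreal_enn2real_if)
  finally have "c * fiber_tail P n x c \<le> e"
    using \<open>0 < c\<close> \<open>0 \<le> e\<close>
    by (simp add: fiber_tail_def measure_pmf.emeasure_eq_measure ennreal_mult'[symmetric] Int_def)
  then have "c * fiber_tail P n x c \<le> c * (\<epsilon> * p)"
    using c_eq \<open>0 < p\<close> by linarith
  then show ?thesis
    using \<open>0 < c\<close> by (simp add: c_def p_def)
qed

lemma hbar_le_markov_level:
  assumes "0 < pX P n x" "0 < \<epsilon>" "fiber_info P n x \<noteq> \<top>"
  shows "hbar P \<epsilon> n x \<le> ereal (markov_level P \<epsilon> n x)"
  using hbar_le_if_fiber_tail_le[OF assms(1) fiber_tail_markov_level_le[OF assms]] .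

section \<open>Uniform integrability\<close>

definition ui_tail :: "(nat \<Rightarrow> ('x list \<times> 'y list) pmf) \<Rightarrow> nat \<Rightarrow> real \<Rightarrow> ennreal" where
  "ui_tail P n u = (\<integral>\<^sup>+ xy. ennreal (\<bar>Zn P n xy\<bar> * indicator {xy. \<bar>Zn P n xy\<bar> \<ge> u} xy) \<partial>P n)"

lemma unif_integrable_ui_tail_le:
  assumes "unif_integrable P" "0 < \<eta>"
  obtains u where "1 \<le> u" "\<And>n. 1 \<le> n \<Longrightarrow> ui_tail P n u \<le> ennreal \<eta>"
proof -
  have "((\<lambda>u. SUP n\<in>{1..}. ui_tail P n u) \<longlongrightarrow> 0) at_top"
    using assms(1) by (simp add: unif_integrable_def ui_tail_def)
  then have "eventually (\<lambda>u. (SUP n\<in>{1..}. ui_tail P n u) < ennreal \<eta>) at_top"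
    using assms(2) by (simp add: order_tendsto_iff)
  then obtain u0 where u0: "\<And>u. u0 \<le> u \<Longrightarrow> (SUP n\<in>{1..}. ui_tail P n u) < ennreal \<eta>"
    by (auto simp: eventually_at_top_linorder)
  define u where "u = max u0 1"
  have "ui_tail P n u \<le> ennreal \<eta>" if "1 \<le> n" for n
  proof -
    have "ui_tail P n u \<le> (SUP n\<in>{1..}. ui_tail P n u)"
      using that by (intro SUP_upper) auto
    also have "\<dots> < ennreal \<eta>"
      using u0 by (simp add: u_def)
    finally show ?thesis
      by simp
  qed
  then show ?thesis
    using that[of u] by (simp add: u_def)
qed

lemma nn_integral_self_info_le_ui_tail:
  fixes P :: "nat \<Rightarrow> ('x list \<times> 'y list) pmf"
  assumes "1 \<le> n" "0 \<le> u"
  shows "(\<integral>\<^sup>+ xy. ennreal (self_info P n xy) * indicator B xy \<partial>P n)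
     \<le> ennreal (real n) * (ui_tail P n u + ennreal u * emeasure (P n) B)"
proof -
  define S where "S = {xy. u \<le> \<bar>Zn P n xy\<bar>}"
  have pointwise: "self_info P n xy * indicator B xy
      \<le> real n * (\<bar>Zn P n xy\<bar> * indicator S xy + u * indicator B xy)" for xy
  proof -
    have "self_info P n xy \<le> real n * \<bar>Zn P n xy\<bar>"
      using assms(1) by (simp add: Zn_eq_self_info abs_divide)
    moreover have "self_info P n xy \<le> real n * u" if "xy \<notin> S"
      using that assms(1) by (simp add: S_def Zn_eq_self_info abs_divide field_simps)
    ultimately show ?thesis
      using assms by (auto split: split_indicator intro: order_trans[OF _ mult_left_mono])
  qed
  have "(\<integral>\<^sup>+ xy. ennreal (self_info P n xy) * indicator B xy \<partial>P n)
      = (\<integral>\<^sup>+ xy. ennreal (self_info P n xy * indicator B xy) \<partial>P n)"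
    by (simp add: nn_integral_set_ennreal)
  also have "\<dots> \<le> (\<integral>\<^sup>+ xy. ennreal (real n * (\<bar>Zn P n xy\<bar> * indicator S xy + u * indicator B xy)) \<partial>P n)"
    by (intro nn_integral_mono ennreal_leI pointwise)
  also have "\<dots> = (\<integral>\<^sup>+ xy. ennreal (real n)
      * (ennreal (\<bar>Zn P n xy\<bar> * indicator S xy) + ennreal u * indicator B xy) \<partial>P n)"
    using assms(2) by (intro nn_integral_cong) (auto simp: ennreal_mult ennreal_plus split: split_indicator)
  also have "\<dots> = ennreal (real n) * (ui_tail P n u + ennreal u * emeasure (P n) B)"
    by (simp add: nn_integral_cmult nn_integral_add ui_tail_def S_def)
  finally show ?thesis .
qed

lemma unif_integrable_abs_continuous:
  fixes P :: "nat \<Rightarrow> ('x list \<times> 'y list) pmf"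
  assumes "unif_integrable P" "0 < \<eta>"
  obtains \<delta> where "0 < \<delta>" "\<And>n B. 1 \<le> n \<Longrightarrow> measure (P n) B \<le> \<delta> \<Longrightarrow>
     (\<integral>\<^sup>+ xy. ennreal (self_info P n xy) * indicator B xy \<partial>P n) \<le> ennreal (real n * \<eta>)"
proof -
  obtain u where u: "1 \<le> u" "\<And>n. 1 \<le> n \<Longrightarrow> ui_tail P n u \<le> ennreal (\<eta> / 2)"
    using unif_integrable_ui_tail_le[OF assms(1), of "\<eta> / 2"] assms(2) by auto
  define \<delta> where "\<delta> = \<eta> / (2 * u)"
  have "(\<integral>\<^sup>+ xy. ennreal (self_info P n xy) * indicator B xy \<partial>P n) \<le> ennreal (real n * \<eta>)"
    if "1 \<le> n" "measure (P n) B \<le> \<delta>" for n B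
  proof -
    have "(\<integral>\<^sup>+ xy. ennreal (self_info P n xy) * indicator B xy \<partial>P n)
        \<le> ennreal (real n) * (ui_tail P n u + ennreal u * emeasure (P n) B)"
      using u(1) by (intro nn_integral_self_info_le_ui_tail[OF that(1)]) simp
    also have "\<dots> \<le> ennreal (real n) * (ennreal (\<eta> / 2) + ennreal u * ennreal \<delta>)"
      using u that
      by (intro mult_left_mono add_mono) (auto simp: measure_pmf.emeasure_eq_measure intro: ennreal_leI)
    also have "\<dots> = ennreal (real n * \<eta>)"
      using u assms(2)
      by (simp add: \<delta>_def ennreal_mult[symmetric] ennreal_plus[symmetric] field_simps del: ennreal_plus)
    finally show ?thesis .
  qed
  moreover have "0 < \<delta>"
    using u assms(2) by (simp add: \<delta>_def)
  ultimately show ?thesis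
    using that by blast
qed

lemma fiber_info_finite:
  assumes "unif_integrable P" "1 \<le> n"
  shows "fiber_info P n x \<noteq> \<top>"
proof -
  obtain u where u: "1 \<le> u" "ui_tail P n u \<le> 1"
    using unif_integrable_ui_tail_le[OF assms(1), of 1] assms(2) by auto
  have "fiber_info P n x \<le> ennreal (real n) * (ui_tail P n u + ennreal u * emeasure (P n) (fst -` {x}))"
    unfolding fiber_info_def using assms(2) u(1) by (intro nn_integral_self_info_le_ui_tail) auto
  also have "\<dots> \<le> ennreal (real n) * (1 + ennreal u * 1)"
    using u by (intro mult_left_mono add_mono) (auto simp: measure_pmf.emeasure_eq_measure)
  also have "\<dots> < \<top>"
    by (simp add: ennreal_mult_less_top)
  finally show ?thesis
    by simp
qed

lemma hbar_finite:
  assumes "unif_integrable P" "1 \<le> n" "0 < \<epsilon>" "\<epsilon> < 1" "0 < pX P n x"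
  shows "hbar P \<epsilon> n x = ereal (real_of_ereal (hbar P \<epsilon> n x))"
    and "0 \<le> real_of_ereal (hbar P \<epsilon> n x)"
  using hbar_nonneg[OF assms(5,4)] hbar_le_markov_level[OF assms(5,3) fiber_info_finite[OF assms(1,2)]]
  by (cases "hbar P \<epsilon> n x"; simp)+

definition Hs_eps_rate :: "(nat \<Rightarrow> ('x list \<times> 'y list) pmf) \<Rightarrow> real \<Rightarrow> ereal" where
  "Hs_eps_rate P \<epsilon> = limsup (\<lambda>n. Hs_eps P \<epsilon> n / ereal (real n))"

lemma Hs_eps_antimono: "\<epsilon>1 \<le> \<epsilon>2 \<Longrightarrow> Hs_eps P \<epsilon>2 n \<le> Hs_eps P \<epsilon>1 n"
  unfolding Hs_eps_def less_eq_ennreal.rep_eq[symmetric]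
  by (intro nn_integral_mono e2ennreal_mono hbar_antimono)

lemma Hs_eps_rate_antimono: "\<epsilon>1 \<le> \<epsilon>2 \<Longrightarrow> Hs_eps_rate P \<epsilon>2 \<le> Hs_eps_rate P \<epsilon>1"
  unfolding Hs_eps_rate_def
  by (intro Limsup_mono eventually_mono[OF eventually_ge_at_top[of 1]] ereal_divide_right_mono
      Hs_eps_antimono) auto

lemma Hs_eq_SUP: "Hs P = (SUP \<epsilon>\<in>{0<..<1}. Hs_eps_rate P \<epsilon>)"
proof -
  define S where "S = (SUP \<epsilon>\<in>{0<..<1}. Hs_eps_rate P \<epsilon>)"
  have "(Hs_eps_rate P \<longlongrightarrow> S) (at_right 0)"
  proof (rule order_tendstoI)
    fix a assume "a < S"
    then obtain \<epsilon>0 where \<epsilon>0: "\<epsilon>0 \<in> {0<..<1}" "a < Hs_eps_rate P \<epsilon>0"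
      unfolding S_def by (auto simp: less_SUP_iff)
    have "eventually (\<lambda>\<epsilon>. \<epsilon> \<in> {0<..<\<epsilon>0}) (at_right 0)"
      using \<epsilon>0(1) by (intro eventually_at_right_real) auto
    then show "eventually (\<lambda>\<epsilon>. a < Hs_eps_rate P \<epsilon>) (at_right 0)"
    proof eventually_elim
      case (elim \<epsilon>)
      then show ?case
        using \<epsilon>0(2) Hs_eps_rate_antimono[of \<epsilon> \<epsilon>0 P] by simp
    qed
  next
    fix a assume "S < a"
    have "eventually (\<lambda>\<epsilon>. \<epsilon> \<in> {0<..<1}) (at_right (0::real))"
      by (rule eventually_at_right_real) simp
    then show "eventually (\<lambda>\<epsilon>. Hs_eps_rate P \<epsilon> < a) (at_right 0)"
    proof eventually_elim
      case (elim \<epsilon>)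
      then have "Hs_eps_rate P \<epsilon> \<le> S"
        unfolding S_def by (rule SUP_upper)
      then show ?case
        using \<open>S < a\<close> by simp
    qed
  qed
  then show ?thesis
    unfolding Hs_def Hs_eps_rate_def[symmetric] S_def by (intro tendsto_Lim) auto
qed

section \<open>The lower bound\<close>

lemma measure_self_info_above_hbar_le:
  fixes P :: "nat \<Rightarrow> ('x::countable list \<times> 'y list) pmf"
  assumes "unif_integrable P" "1 \<le> n" "0 < \<epsilon>" "\<epsilon> < 1" "0 < t"
  defines "h x \<equiv> real_of_ereal (hbar P \<epsilon> n x)"
  shows "measure (P n) {xy. 0 < pX P n (fst xy) \<and> h (fst xy) + t < self_info P n xy} \<le> \<epsilon>"
    (is "measure (P n) ?B \<le> _")
proof -
  have fiber_le: "emeasure (P n) (?B \<inter> fst -` {x}) \<le> ennreal \<epsilon> * ennreal (pmf (map_pmf fst (P n)) x)" for x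
  proof (cases "0 < pX P n x")
    case True
    obtain r where "hbar P \<epsilon> n x = ereal r"
      using hbar_finite(1)[OF assms(1-4) True] by blast
    then have "hbar P \<epsilon> n x < ereal (h x + t)"
      using assms(5) by (simp add: h_def)
    then have "fiber_tail P n x (h x + t) \<le> \<epsilon> * pX P n x"
      by (rule fiber_tail_le_if_hbar_less[OF True])
    moreover have "?B \<inter> fst -` {x} = fst -` {x} \<inter> {xy. h x + t < self_info P n xy}"
      using True by auto
    ultimately show ?thesis
      using assms(3)
      by (simp add: fiber_tail_def measure_pmf.emeasure_eq_measure pX_def ennreal_leI ennreal_mult[symmetric])
  next
    case False
    then have "?B \<inter> fst -` {x} = {}"
      by auto
    then show ?thesis
      by simp
  qed
  have "emeasure (P n) ?B \<le> (\<integral>\<^sup>+ x. ennreal \<epsilon> * ennreal (pmf (map_pmf fst (P n)) x) \<partial>count_space UNIV)"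
    unfolding emeasure_pmf_fiberwise[of "P n" ?B] by (intro nn_integral_mono fiber_le)
  also have "\<dots> = ennreal \<epsilon>"
    by (simp add: nn_integral_cmult nn_integral_pmf)
  finally show ?thesis
    using assms(3) by (simp add: measure_pmf.emeasure_eq_measure)
qed

lemma exists_small_set_self_info_le_hbar:
  fixes P :: "nat \<Rightarrow> ('x::countable list \<times> 'y list) pmf"
  assumes "unif_integrable P" "1 \<le> n" "0 < \<epsilon>" "\<epsilon> < 1" "0 < t"
  obtains B where "measure (P n) B \<le> \<epsilon>"
    and "\<And>xy. xy \<in> set_pmf (P n) \<Longrightarrow> xy \<notin> B \<Longrightarrow>
      ennreal (self_info P n xy) \<le> e2ennreal (hbar P \<epsilon> n (fst xy)) + ennreal t"
proof -
  define h where "h x = real_of_ereal (hbar P \<epsilon> n x)" for x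
  note h = hbar_finite[OF assms(1-4), folded h_def]
  define B where "B = {xy. 0 < pX P n (fst xy) \<and> h (fst xy) + t < self_info P n xy}"
  have "ennreal (self_info P n xy) \<le> e2ennreal (hbar P \<epsilon> n (fst xy)) + ennreal t"
    if "xy \<in> set_pmf (P n)" "xy \<notin> B" for xy
  proof -
    have pos: "0 < pX P n (fst xy)"
      using that(1) by (rule pX_pos_of_set_pmf)
    then have "self_info P n xy \<le> h (fst xy) + t"
      using that(2) by (auto simp: B_def)
    then have "ennreal (self_info P n xy) \<le> ennreal (h (fst xy)) + ennreal t"
      using h(2)[OF pos] assms(5) by (simp add: ennreal_plus[symmetric] ennreal_leI del: ennreal_plus)
    then show ?thesis
      by (subst h(1)[OF pos]) simp
  qed
  moreover have "measure (P n) B \<le> \<epsilon>"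
    unfolding B_def h_def by (rule measure_self_info_above_hbar_le[OF assms])
  ultimately show ?thesis
    using that by blast
qed

lemma cond_entropy_le_Hs_eps:
  fixes P :: "nat \<Rightarrow> ('x::countable list \<times> 'y list) pmf"
  assumes "unif_integrable P" "1 \<le> n" "0 < \<epsilon>" "\<epsilon> < 1" "0 < t" "0 \<le> c"
    and small: "\<And>B. measure (P n) B \<le> \<epsilon> \<Longrightarrow>
      (\<integral>\<^sup>+ xy. ennreal (self_info P n xy) * indicator B xy \<partial>P n) \<le> ennreal c"
  shows "cond_entropy P n \<le> Hs_eps P \<epsilon> n + ereal (t + c)"
proof -
  obtain B where B: "measure (P n) B \<le> \<epsilon>"
    and outside_B: "\<And>xy. xy \<in> set_pmf (P n) \<Longrightarrow> xy \<notin> B \<Longrightarrow>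
      ennreal (self_info P n xy) \<le> e2ennreal (hbar P \<epsilon> n (fst xy)) + ennreal t"
    using exists_small_set_self_info_le_hbar[OF assms(1-5)] by blast
  have "(\<integral>\<^sup>+ xy. ennreal (self_info P n xy) \<partial>P n)
      \<le> (\<integral>\<^sup>+ xy. e2ennreal (hbar P \<epsilon> n (fst xy)) + ennreal t
          + ennreal (self_info P n xy) * indicator B xy \<partial>P n)"
    by (intro nn_integral_mono_AE AE_pmfI) (auto dest: outside_B split: split_indicator)
  also have "\<dots> = (\<integral>\<^sup>+ x. e2ennreal (hbar P \<epsilon> n x) \<partial>map_pmf fst (P n)) + ennreal t
      + (\<integral>\<^sup>+ xy. ennreal (self_info P n xy) * indicator B xy \<partial>P n)"
    by (simp add: nn_integral_add measure_pmf.emeasure_space_1)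
  also have "\<dots> \<le> (\<integral>\<^sup>+ x. e2ennreal (hbar P \<epsilon> n x) \<partial>map_pmf fst (P n)) + ennreal (t + c)"
    using small[OF B] assms(5,6) by (simp add: add.assoc add_left_mono ennreal_plus)
  finally have "enn2ereal (\<integral>\<^sup>+ xy. ennreal (self_info P n xy) \<partial>P n)
      \<le> enn2ereal ((\<integral>\<^sup>+ x. e2ennreal (hbar P \<epsilon> n x) \<partial>map_pmf fst (P n)) + ennreal (t + c))"
    by (simp only: less_eq_ennreal.rep_eq[symmetric])
  then show ?thesis
    using assms(5,6) by (simp add: cond_entropy_eq_nn_integral Hs_eps_def plus_ennreal.rep_eq)
qed

lemma limsup_cond_entropy_le_Hs:
  fixes P :: "nat \<Rightarrow> ('x::countable list \<times> 'y list) pmf"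
  assumes "unif_integrable P"
  shows "limsup (\<lambda>n. cond_entropy P n / ereal (real n)) \<le> Hs P"
proof (rule ereal_le_epsilon2)
  fix e :: real assume "0 < e"
  then obtain \<delta> where "0 < \<delta>" and small: "\<And>n B. 1 \<le> n \<Longrightarrow> measure (P n) B \<le> \<delta> \<Longrightarrow>
      (\<integral>\<^sup>+ xy. ennreal (self_info P n xy) * indicator B xy \<partial>P n) \<le> ennreal (real n * (e / 2))"
    using unif_integrable_abs_continuous[OF assms, of "e / 2"] by auto
  define \<epsilon> where "\<epsilon> = min \<delta> (1 / 2)"
  have \<epsilon>: "0 < \<epsilon>" "\<epsilon> < 1" "\<epsilon> \<in> {0<..<1}"
    using \<open>0 < \<delta>\<close> by (auto simp: \<epsilon>_def)
  have "cond_entropy P n \<le> Hs_eps P \<epsilon> n + ereal (real n * e)" if "1 \<le> n" for n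
    using cond_entropy_le_Hs_eps[OF assms that \<epsilon>(1,2), of "real n * (e / 2)" "real n * (e / 2)"]
      small[OF that] that \<open>0 < e\<close> by (simp add: \<epsilon>_def field_simps)
  then have "limsup (\<lambda>n. cond_entropy P n / ereal (real n)) \<le> Hs_eps_rate P \<epsilon> + ereal e"
    unfolding Hs_eps_rate_def
    by (intro limsup_div_le_add eventually_mono[OF eventually_ge_at_top[of 1]])
      (auto simp: cond_entropy_def Hs_eps_def)
  also have "\<dots> \<le> Hs P + ereal e"
    unfolding Hs_eq_SUP using \<epsilon>(3) by (intro add_right_mono SUP_upper)
  finally show "limsup (\<lambda>n. cond_entropy P n / ereal (real n)) \<le> Hs P + ereal e" .
qed

section \<open>The upper bound\<close>

lemma measure_bad_fibers_le:
  fixes P :: "nat \<Rightarrow> ('x::countable list \<times> 'y list) pmf" and \<alpha> \<epsilon> :: real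
  assumes "1 \<le> n" "0 < \<epsilon>"
  defines "D \<equiv> {x. 0 < pX P n x \<and> \<epsilon> * pX P n x < fiber_tail P n x (real n * \<alpha>)}"
  shows "\<epsilon> * measure (P n) (fst -` D) \<le> measure (P n) {xy. \<alpha> < Zn P n xy}"
proof -
  have fiber: "{xy. \<alpha> < Zn P n xy} \<inter> fst -` {x} = fst -` {x} \<inter> {xy. real n * \<alpha> < self_info P n xy}" for x
    using assms(1) by (auto simp: Zn_eq_self_info field_simps)
  have "ennreal \<epsilon> * emeasure (P n) (fst -` D)
      = (\<integral>\<^sup>+ x. ennreal (\<epsilon> * pX P n x) * indicator D x \<partial>count_space UNIV)"
    using assms(2)
    by (simp add: emeasure_pmf_vimage_fst nn_integral_cmult[symmetric] pX_def ennreal_mult mult.assoc)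
  also have "\<dots> \<le> (\<integral>\<^sup>+ x. emeasure (P n) ({xy. \<alpha> < Zn P n xy} \<inter> fst -` {x}) \<partial>count_space UNIV)"
    by (intro nn_integral_mono)
      (auto simp: D_def fiber fiber_tail_def measure_pmf.emeasure_eq_measure ennreal_leI
        split: split_indicator)
  also have "\<dots> = emeasure (P n) {xy. \<alpha> < Zn P n xy}"
    by (rule emeasure_pmf_fiberwise[symmetric])
  finally show ?thesis
    using assms(2) by (simp add: measure_pmf.emeasure_eq_measure ennreal_mult[symmetric])
qed

lemma nn_integral_markov_level:
  fixes P :: "nat \<Rightarrow> ('x::countable list \<times> 'y list) pmf"
  assumes "unif_integrable P" "1 \<le> n" "0 < \<epsilon>" "D \<subseteq> {x. 0 < pX P n x}"
  shows "(\<integral>\<^sup>+ x. indicator D x * ennreal (markov_level P \<epsilon> n x) \<partial>map_pmf fst (P n))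
    = ennreal (1 / \<epsilon>) * ((\<integral>\<^sup>+ xy. ennreal (self_info P n xy) * indicator (fst -` D) xy \<partial>P n)
        + emeasure (P n) (fst -` D))"
proof -
  have pointwise: "ennreal (pX P n x) * (indicator D x * ennreal (markov_level P \<epsilon> n x))
      = ennreal (1 / \<epsilon>) * (indicator D x * fiber_info P n x + ennreal (pX P n x) * indicator D x)" for x
  proof (cases "x \<in> D")
    case True
    define e where "e = enn2real (fiber_info P n x)"
    have "0 < pX P n x"
      using True assms(4) by auto
    then have "pX P n x * markov_level P \<epsilon> n x = 1 / \<epsilon> * (e + pX P n x)"
      using assms(3) by (simp add: markov_level_def e_def field_simps)
    moreover have "fiber_info P n x = ennreal e"
      using fiber_info_finite[OF assms(1,2)] by (simp add: e_def ennreal_enn2real_if)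
    moreover have "0 \<le> e"
      by (simp add: e_def)
    ultimately show ?thesis
      using True assms(3) \<open>0 < pX P n x\<close>
      by (simp add: ennreal_mult'[symmetric] ennreal_plus[symmetric] ennreal_mult[symmetric]
          del: ennreal_plus)
  qed simp
  have "(\<integral>\<^sup>+ x. indicator D x * ennreal (markov_level P \<epsilon> n x) \<partial>map_pmf fst (P n))
      = (\<integral>\<^sup>+ x. ennreal (1 / \<epsilon>) * (indicator D x * fiber_info P n x + ennreal (pX P n x) * indicator D x)
          \<partial>count_space UNIV)"
    unfolding nn_integral_measure_pmf pX_def[symmetric] by (intro nn_integral_cong pointwise)
  also have "\<dots> = ennreal (1 / \<epsilon>) * ((\<integral>\<^sup>+ x. indicator D x * fiber_info P n x \<partial>count_space UNIV)
      + (\<integral>\<^sup>+ x. ennreal (pX P n x) * indicator D x \<partial>count_space UNIV))"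
    by (simp add: nn_integral_cmult nn_integral_add)
  finally show ?thesis
    by (simp only: fiber_info_def nn_integral_pmf_vimage_fst[where D = D] emeasure_pmf_vimage_fst pX_def)
qed

lemma hbar_le_threshold_or_markov_level:
  assumes "unif_integrable P" "1 \<le> n" "0 < \<epsilon>" "0 < pX P n x"
  shows "e2ennreal (hbar P \<epsilon> n x) \<le> ennreal a
    + indicator {x. 0 < pX P n x \<and> \<epsilon> * pX P n x < fiber_tail P n x a} x * ennreal (markov_level P \<epsilon> n x)"
proof (cases "\<epsilon> * pX P n x < fiber_tail P n x a")
  case True
  then show ?thesis
    using e2ennreal_mono[OF hbar_le_markov_level[OF assms(4,3) fiber_info_finite[OF assms(1,2)]]] assms(4)
    by (simp add: add_increasing)
next
  case False
  then show ?thesis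
    using e2ennreal_mono[OF hbar_le_if_fiber_tail_le[OF assms(4), of a \<epsilon>]] by simp
qed

lemma Hs_eps_le_threshold_bound:
  fixes P :: "nat \<Rightarrow> ('x::countable list \<times> 'y list) pmf"
  assumes "unif_integrable P" "1 \<le> n" "0 < \<epsilon>" "\<epsilon> < 1" "0 \<le> \<alpha>" "0 \<le> c"
    and tail: "measure (P n) {xy. \<alpha> < Zn P n xy} \<le> \<epsilon> * \<rho>"
    and small: "\<And>B. measure (P n) B \<le> \<rho> \<Longrightarrow>
      (\<integral>\<^sup>+ xy. ennreal (self_info P n xy) * indicator B xy \<partial>P n) \<le> ennreal c"
  shows "Hs_eps P \<epsilon> n \<le> ereal (real n * \<alpha> + (c + \<rho>) / \<epsilon>)"
proof -
  define D where "D = {x. 0 < pX P n x \<and> \<epsilon> * pX P n x < fiber_tail P n x (real n * \<alpha>)}"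
  have "\<epsilon> * measure (P n) (fst -` D) \<le> \<epsilon> * \<rho>"
    using measure_bad_fibers_le[OF assms(2,3), of P \<alpha>] tail by (simp add: D_def)
  then have D_small: "measure (P n) (fst -` D) \<le> \<rho>"
    using assms(3) by simp
  then have "0 \<le> \<rho>"
    using measure_nonneg order_trans by blast
  have "(\<integral>\<^sup>+ x. e2ennreal (hbar P \<epsilon> n x) \<partial>map_pmf fst (P n))
      \<le> (\<integral>\<^sup>+ x. ennreal (real n * \<alpha>) + indicator D x * ennreal (markov_level P \<epsilon> n x) \<partial>map_pmf fst (P n))"
    unfolding D_def
    by (intro nn_integral_mono_AE AE_pmfI hbar_le_threshold_or_markov_level[OF assms(1-3)])
      (simp add: pX_def pmf_positive)
  also have "\<dots> = ennreal (real n * \<alpha>) + ennreal (1 / \<epsilon>)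
      * ((\<integral>\<^sup>+ xy. ennreal (self_info P n xy) * indicator (fst -` D) xy \<partial>P n) + emeasure (P n) (fst -` D))"
    using nn_integral_markov_level[OF assms(1-3), of D]
    by (simp add: nn_integral_add measure_pmf.emeasure_space_1 subset_eq D_def[symmetric])
      (simp add: D_def)
  also have "\<dots> \<le> ennreal (real n * \<alpha>) + ennreal (1 / \<epsilon>) * (ennreal c + ennreal \<rho>)"
    using small[OF D_small] D_small
    by (intro add_left_mono mult_left_mono add_mono) (auto simp: measure_pmf.emeasure_eq_measure ennreal_leI)
  also have "\<dots> = ennreal (real n * \<alpha> + (c + \<rho>) / \<epsilon>)"
    using assms(3,5,6) \<open>0 \<le> \<rho>\<close>
    by (simp add: ennreal_mult[symmetric] ennreal_plus[symmetric] del: ennreal_plus)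
  finally have "Hs_eps P \<epsilon> n \<le> enn2ereal (ennreal (real n * \<alpha> + (c + \<rho>) / \<epsilon>))"
    unfolding Hs_eps_def by (simp only: less_eq_ennreal.rep_eq[symmetric])
  then show ?thesis
    using assms(3,5,6) \<open>0 \<le> \<rho>\<close> by (simp del: ennreal_plus)
qed

lemma spectral_threshold_nonneg:
  fixes P :: "nat \<Rightarrow> ('x list \<times> 'y list) pmf"
  assumes "((\<lambda>n. measure (P n) {xy. \<alpha> < Zn P n xy}) \<longlongrightarrow> 0) sequentially"
  shows "0 \<le> \<alpha>"
proof (rule ccontr)
  assume "\<not> 0 \<le> \<alpha>"
  moreover have "0 \<le> Zn P n xy" if "xy \<in> set_pmf (P n)" for n xy
    using self_info_nonneg[of xy P n, OF that] by (simp add: Zn_eq_self_info)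
  ultimately have "\<alpha> < Zn P n xy" if "xy \<in> set_pmf (P n)" for n xy
    using that by (meson less_le_trans not_le)
  then have "measure (P n) {xy. \<alpha> < Zn P n xy} = 1" for n
    by (subst measure_pmf.prob_eq_1) (auto intro!: AE_pmfI)
  with assms show False
    by (simp add: LIMSEQ_const_iff)
qed

lemma Hs_eps_rate_le_threshold:
  fixes P :: "nat \<Rightarrow> ('x::countable list \<times> 'y list) pmf"
  assumes "unif_integrable P" "0 < \<epsilon>" "\<epsilon> < 1"
    and lim: "((\<lambda>n. measure (P n) {xy. \<alpha> < Zn P n xy}) \<longlongrightarrow> 0) sequentially"
  shows "Hs_eps_rate P \<epsilon> \<le> ereal \<alpha>"
proof (rule ereal_le_epsilon2)
  fix e :: real assume "0 < e"
  define \<eta> where "\<eta> = e * \<epsilon> / 2"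
  have "0 < \<eta>"
    using \<open>0 < e\<close> assms(2) by (simp add: \<eta>_def)
  then obtain \<delta> where "0 < \<delta>" and small: "\<And>n B. 1 \<le> n \<Longrightarrow> measure (P n) B \<le> \<delta> \<Longrightarrow>
      (\<integral>\<^sup>+ xy. ennreal (self_info P n xy) * indicator B xy \<partial>P n) \<le> ennreal (real n * \<eta>)"
    using unif_integrable_abs_continuous[OF assms(1)] by auto
  define \<rho> where "\<rho> = min \<delta> \<eta>"
  have "0 < \<epsilon> * \<rho>"
    using \<open>0 < \<delta>\<close> \<open>0 < \<eta>\<close> assms(2) by (simp add: \<rho>_def)
  have "eventually (\<lambda>n. Hs_eps P \<epsilon> n \<le> 0 + ereal (real n * (\<alpha> + e))) sequentially"
    using order_tendstoD(2)[OF lim \<open>0 < \<epsilon> * \<rho>\<close>] eventually_ge_at_top[of 1]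
  proof eventually_elim
    case (elim n)
    have "\<rho> \<le> real n * \<eta>"
      using elim(2) \<open>0 < \<eta>\<close> by (simp add: \<rho>_def min.coboundedI2 mult_le_cancel_right1)
    then have "real n * \<alpha> + (real n * \<eta> + \<rho>) / \<epsilon> \<le> real n * (\<alpha> + e)"
      using assms(2) by (simp add: \<eta>_def field_simps)
    moreover have "Hs_eps P \<epsilon> n \<le> ereal (real n * \<alpha> + (real n * \<eta> + \<rho>) / \<epsilon>)"
      using spectral_threshold_nonneg[OF lim] elim \<open>0 < \<eta>\<close>
      by (intro Hs_eps_le_threshold_bound[OF assms(1) _ assms(2,3)] small) (auto simp: \<rho>_def)
    ultimately show ?case
      by (simp add: order_trans)
  qed
  then have "Hs_eps_rate P \<epsilon> \<le> limsup (\<lambda>n. 0 / ereal (real n)) + ereal (\<alpha> + e)"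
    unfolding Hs_eps_rate_def by (rule limsup_div_le_add) (auto simp: Hs_eps_def)
  then show "Hs_eps_rate P \<epsilon> \<le> ereal \<alpha> + ereal e"
    by (simp add: Limsup_const)
qed

lemma Hs_le_spec_sup_entropy:
  fixes P :: "nat \<Rightarrow> ('x::countable list \<times> 'y list) pmf"
  assumes "unif_integrable P"
  shows "Hs P \<le> spec_sup_entropy P"
  unfolding spec_sup_entropy_def Hs_eq_SUP
  by (intro Inf_greatest SUP_least) (auto intro: Hs_eps_rate_le_threshold[OF assms])

theorem theorem8:
  fixes P :: "nat \<Rightarrow> ('x::countable list \<times> 'y::countable list) pmf"
  assumes "gen_source P"
    and "unif_integrable P"
  shows "limsup (\<lambda>n. cond_entropy P n / ereal (real n)) \<le> Hs P
         \<and> Hs P \<le> spec_sup_entropy P"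
  using limsup_cond_entropy_le_Hs[OF assms(2)] Hs_le_spec_sup_entropy[OF assms(2)] by blast

end
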